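(* Let $(A,\cdot,\alpha)$ be a Hom-Malcev algebra over a field $\mathbb{K}$ of characteristic $0$. Then the identity $$J_{\alpha}(w\cdot x,\alpha(y),\alpha(z)) = J_{\alpha}(w,y,z)\cdot\alpha^{2}(x) + \alpha^{2}(w)\cdot J_{\alpha}(x,y,z) - 2J_{\alpha}(y\cdot z,\alpha(w),\alpha(x)) \qquad (\ast)$$ holds for all $w,x,y,z\in A$. Moreover, in any anticommutative multiplicative Hom-algebra $(A,\cdot,\alpha)$ over $\mathbb{K}$, the identity $(\ast)$ (for all $w,x,y,z\in A$) is equivalent to the Hom-Malcev identity $$J_{\alpha}(\alpha(x),\alpha(y),x\cdot z) = J_{\alpha}(x,y,z)\cdot\alpha^{2}(x)$$ for all $x,y,z\in A$.
   Context: A (multiplicative) Hom-algebra is a triple $(A,\cdot,\alpha)$ where $A$ is a vector space over a field $\mathbb{K}$ of characteristic $0$, $\cdot:A\times A\to A$ is bilinear (written $xy$ or $x\cdot y$), and $\alpha:A\to A$ is linear with $\alpha(x\cdot y)=\alpha(x)\cdot\alpha(y)$ for all $x,y$. It is anticommutative if $x\cdot y=-y\cdot x$ for all $x,y$. The Hom-Jacobian is $J_{\alpha}(x,y,z)=xy\cdot\alpha(z)+yz\cdot\alpha(x)+zx\cdot\alpha(y)$, where $xy\cdot\alpha(z)$ means $(x\cdot y)\cdot\alpha(z)$. A Hom-Malcev algebra is an anticommutative multiplicative Hom-algebra satisfying $J_{\alpha}(\alpha(x),\alpha(y),x\cdot z)=J_{\alpha}(x,y,z)\cdot\alpha^{2}(x)$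 for all $x,y,z\in A$. *)

theory Defs
  imports Main "HOL.Vector_Spaces"
begin

definition hom_algebra ::
  "('k::field \<Rightarrow> 'a::ab_group_add \<Rightarrow> 'a) \<Rightarrow> ('a \<Rightarrow> 'a \<Rightarrow> 'a) \<Rightarrow> ('a \<Rightarrow> 'a) \<Rightarrow> bool" where
  "hom_algebra scale mult alpha \<longleftrightarrow>
     vector_space scale \<and>
     (\<forall>x. Vector_Spaces.linear scale scale (mult x)) \<and>
     (\<forall>y. Vector_Spaces.linear scale scale (\<lambda>x. mult x y)) \<and>
     Vector_Spaces.linear scale scale alpha \<and>
     (\<forall>x y. alpha (mult x y) = mult (alpha x) (alpha y))"

definition anticommutative :: "('a::ab_group_add \<Rightarrow> 'a \<Rightarrow> 'a) \<Rightarrow> bool" where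
  "anticommutative mult \<longleftrightarrow> (\<forall>x y. mult x y = - mult y x)"

definition hom_jacobian :: "('a \<Rightarrow> 'a \<Rightarrow> 'a::ab_group_add) \<Rightarrow> ('a \<Rightarrow> 'a) \<Rightarrow> 'a \<Rightarrow> 'a \<Rightarrow> 'a \<Rightarrow> 'a" where
  "hom_jacobian mult alpha x y z =
     mult (mult x y) (alpha z) + mult (mult y z) (alpha x) + mult (mult z x) (alpha y)"

definition hom_malcev_identity :: "('a \<Rightarrow> 'a \<Rightarrow> 'a::ab_group_add) \<Rightarrow> ('a \<Rightarrow> 'a) \<Rightarrow> bool" where
  "hom_malcev_identity mult alpha \<longleftrightarrow>
     (\<forall>x y z. hom_jacobian mult alpha (alpha x) (alpha y) (mult x z)
              = mult (hom_jacobian mult alpha x y z) (alpha (alpha x)))"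

definition hom_malcev :: "('k::field \<Rightarrow> 'a::ab_group_add \<Rightarrow> 'a) \<Rightarrow> ('a \<Rightarrow> 'a \<Rightarrow> 'a) \<Rightarrow> ('a \<Rightarrow> 'a) \<Rightarrow> bool" where
  "hom_malcev scale mult alpha \<longleftrightarrow>
     hom_algebra scale mult alpha \<and> anticommutative mult \<and> hom_malcev_identity mult alpha"

definition star_identity :: "('a \<Rightarrow> 'a \<Rightarrow> 'a::ab_group_add) \<Rightarrow> ('a \<Rightarrow> 'a) \<Rightarrow> bool" where
  "star_identity mult alpha \<longleftrightarrow>
     (\<forall>w x y z. hom_jacobian mult alpha (mult w x) (alpha y) (alpha z)
        = mult (hom_jacobian mult alpha w y z) (alpha (alpha x))
          + mult (alpha (alpha w)) (hom_jacobian mult alpha x y z)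
          - (hom_jacobian mult alpha (mult y z) (alpha w) (alpha x)
             + hom_jacobian mult alpha (mult y z) (alpha w) (alpha x)))"

end

theory Submission
  imports Defs
begin

text \<open>Polarising the Hom-Malcev identity J(\<alpha>x, \<alpha>y, xz) = J(x, y, z)\<alpha>^2(x) in x gives
its linearisation. Four instances of the linearisation, added to an identity between the six
Jacobians J(pq, \<alpha>r, \<alpha>s) ({p,q,r,s} = {w,x,y,z}) that holds in every anticommutative
multiplicative Hom-algebra, sum to twice the identity (*). Conversely, putting y = w in (*) and
writing f(x, z) = J(wx, \<alpha>w, \<alpha>z) gives f(x, z) + 2f(z, x) = -J(x, w, z)\<alpha>^2(w); with the
same relation for x and z exchanged, eliminating f(z, x) leaves 3f(x, z) = 3J(x, w, z)\<alpha>^2(w),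
which is the Hom-Malcev identity. Characteristic 0 allows the divisions by 2 and 3.\<close>

lemma hom_jacobian_rotate: "hom_jacobian mult alpha x y z = hom_jacobian mult alpha y z x"
  by (simp add: hom_jacobian_def algebra_simps)

lemma vector_space_double_eq_0:
  fixes scale :: "'k::field_char_0 \<Rightarrow> 'a::ab_group_add \<Rightarrow> 'a" and a :: 'a
  assumes "vector_space scale" and "a + a = 0"
  shows "a = 0"
proof -
  interpret vector_space scale by fact
  have "scale (1 + 1) a = a + a"
    by (simp only: scale_left_distrib scale_one)
  with assms(2) have "scale 2 a = 0" by simp
  then show ?thesis by simp
qed

lemma vector_space_triple_eq_0:
  fixes scale :: "'k::field_char_0 \<Rightarrow> 'a::ab_group_add \<Rightarrow> 'a" and a :: 'a
  assumes "vector_space scale" and "a + a + a = 0"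
  shows "a = 0"
proof -
  interpret vector_space scale by fact
  have "scale (1 + 1 + 1) a = a + a + a"
    by (simp only: scale_left_distrib scale_one)
  with assms(2) have "scale 3 a = 0" by simp
  then show ?thesis by simp
qed

locale anticommutative_hom_algebra =
  fixes scale :: "'k::field_char_0 \<Rightarrow> 'a::ab_group_add \<Rightarrow> 'a"
    and mult :: "'a \<Rightarrow> 'a \<Rightarrow> 'a"  (infixl "\<cdot>" 70)
    and alpha :: "'a \<Rightarrow> 'a"
  assumes hom_algebra: "hom_algebra scale mult alpha"
    and anticommutative: "anticommutative mult"
begin

abbreviation J :: "'a \<Rightarrow> 'a \<Rightarrow> 'a \<Rightarrow> 'a" where
  "J \<equiv> hom_jacobian mult alpha"

lemma vector_space: "vector_space scale"
  using hom_algebra unfolding hom_algebra_def by blast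

lemma module_hom_mult_left: "module_hom scale scale (\<lambda>a. a \<cdot> c)"
  using hom_algebra unfolding hom_algebra_def module_hom_iff_linear by blast

lemma module_hom_mult_right: "module_hom scale scale (mult a)"
  using hom_algebra unfolding hom_algebra_def module_hom_iff_linear by blast

lemma module_hom_alpha: "module_hom scale scale alpha"
  using hom_algebra unfolding hom_algebra_def module_hom_iff_linear by blast

lemma mult_add_left: "(a + b) \<cdot> c = a \<cdot> c + b \<cdot> c"
  using module_hom.add[OF module_hom_mult_left] .

lemma mult_add_right: "a \<cdot> (b + c) = a \<cdot> b + a \<cdot> c"
  using module_hom.add[OF module_hom_mult_right] .

lemma mult_minus_left [simp]: "(- a) \<cdot> c = - (a \<cdot> c)"
  using module_hom.neg[OF module_hom_mult_left] .

lemma mult_minus_right [simp]: "a \<cdot> (- c) = - (a \<cdot> c)"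
  using module_hom.neg[OF module_hom_mult_right] .

lemma mult_diff_left: "(a - b) \<cdot> c = a \<cdot> c - b \<cdot> c"
  using module_hom.diff[OF module_hom_mult_left] .

lemma mult_zero_left [simp]: "0 \<cdot> c = 0"
  using module_hom.zero[OF module_hom_mult_left] .

lemma alpha_add: "alpha (a + b) = alpha a + alpha b"
  using module_hom.add[OF module_hom_alpha] .

lemma alpha_minus [simp]: "alpha (- a) = - alpha a"
  using module_hom.neg[OF module_hom_alpha] .

lemma alpha_mult: "alpha (a \<cdot> b) = alpha a \<cdot> alpha b"
  using hom_algebra unfolding hom_algebra_def by blast

lemma mult_anticomm: "a \<cdot> b = - (b \<cdot> a)"
  using anticommutative unfolding anticommutative_def by blast

lemma J_add_left: "J (a + b) c d = J a c d + J b c d"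
  by (simp add: hom_jacobian_def mult_add_left mult_add_right alpha_add algebra_simps)

lemma J_add_middle: "J a (b + c) d = J a b d + J a c d"
  by (simp add: hom_jacobian_def mult_add_left mult_add_right alpha_add algebra_simps)

lemma J_minus_left [simp]: "J (- a) c d = - J a c d"
  by (simp add: hom_jacobian_def)

lemma J_swap: "J y x z = - J x y z"
  by (simp add: hom_jacobian_def mult_anticomm[of y x] mult_anticomm[of x z]
      mult_anticomm[of z y])

lemma J_swap23: "J x z y = - J x y z"
  using J_swap[of z x y] hom_jacobian_rotate[of mult alpha x y z]
    hom_jacobian_rotate[of mult alpha y z x] by simp

lemma J_self: "J x x z = 0"
  by (rule vector_space_double_eq_0[OF vector_space]) (metis J_swap eq_neg_iff_add_eq_0)

lemma J_alpha_alpha_expand: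
  "J u (alpha c) (alpha d) =
     (u \<cdot> alpha c) \<cdot> alpha (alpha d) - (u \<cdot> alpha d) \<cdot> alpha (alpha c)
     + (alpha c \<cdot> alpha d) \<cdot> alpha u"
  by (simp add: hom_jacobian_def mult_anticomm[of "alpha d" u])

lemma J_mult_expand:
  "J a b c \<cdot> v = ((a \<cdot> b) \<cdot> alpha c) \<cdot> v + ((b \<cdot> c) \<cdot> alpha a) \<cdot> v - ((a \<cdot> c) \<cdot> alpha b) \<cdot> v"
  by (simp add: hom_jacobian_def mult_anticomm[of c a] mult_add_left mult_diff_left)

lemma J_products_identity:
  "J (w \<cdot> x) (alpha y) (alpha z) + J (y \<cdot> z) (alpha w) (alpha x)
   - J (x \<cdot> z) (alpha w) (alpha y) - J (w \<cdot> y) (alpha x) (alpha z)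
   + J (w \<cdot> z) (alpha x) (alpha y) + J (x \<cdot> y) (alpha w) (alpha z)
   = J w y z \<cdot> alpha (alpha x) - J x y z \<cdot> alpha (alpha w)
     - J w x z \<cdot> alpha (alpha y) + J w x y \<cdot> alpha (alpha z)"
  by (simp add: J_alpha_alpha_expand J_mult_expand alpha_mult
      mult_anticomm[of "alpha y \<cdot> alpha z" "alpha w \<cdot> alpha x"]
      mult_anticomm[of "alpha x \<cdot> alpha z" "alpha w \<cdot> alpha y"]
      mult_anticomm[of "alpha x \<cdot> alpha y" "alpha w \<cdot> alpha z"] algebra_simps)

lemma hom_malcev_identity_rotated:
  assumes "hom_malcev_identity mult alpha"
  shows "J (x \<cdot> z) (alpha x) (alpha y) = J x y z \<cdot> alpha (alpha x)"
  using assms hom_jacobian_rotate[of mult alpha "alpha x"]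
    hom_jacobian_rotate[of mult alpha "alpha y"]
  unfolding hom_malcev_identity_def by metis

lemma hom_malcev_identity_linearized:
  assumes "hom_malcev_identity mult alpha"
  shows "J (w \<cdot> z) (alpha x) (alpha y) + J (x \<cdot> z) (alpha w) (alpha y)
    = J x y z \<cdot> alpha (alpha w) + J w y z \<cdot> alpha (alpha x)"
proof -
  note malcev = hom_malcev_identity_rotated[OF assms]
  have "J ((x + w) \<cdot> z) (alpha (x + w)) (alpha y) = J (x + w) y z \<cdot> alpha (alpha (x + w))"
    by (rule malcev)
  then show ?thesis
    using malcev[of x z y] malcev[of w z y]
    by (simp add: J_add_left J_add_middle mult_add_left mult_add_right alpha_add algebra_simps)
qed

lemma star_identity_if_hom_malcev_identity:
  assumes "hom_malcev_identity mult alpha"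
  shows "star_identity mult alpha"
  unfolding star_identity_def
proof (intro allI)
  fix w x y z
  note linearized = hom_malcev_identity_linearized[OF assms]
  let ?T1 = "J (w \<cdot> x) (alpha y) (alpha z)" and ?T2 = "J (y \<cdot> z) (alpha w) (alpha x)"
    and ?T3 = "J (x \<cdot> z) (alpha w) (alpha y)" and ?T4 = "J (w \<cdot> y) (alpha x) (alpha z)"
    and ?T5 = "J (w \<cdot> z) (alpha x) (alpha y)" and ?T6 = "J (x \<cdot> y) (alpha w) (alpha z)"
  let ?Pw = "J x y z \<cdot> alpha (alpha w)" and ?Px = "J w y z \<cdot> alpha (alpha x)"
    and ?Py = "J w x z \<cdot> alpha (alpha y)" and ?Pz = "J w x y \<cdot> alpha (alpha z)"
  have E1: "?T5 + ?T3 = ?Pw + ?Px"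
    using linearized[of w z x y] .
  have E2: "?T2 - ?T5 = ?Py - ?Pw"
    using linearized[of y z w x]
    by (simp add: J_swap23[of "w \<cdot> z" "alpha x" "alpha y"] J_swap[of y x])
  have E3: "?T1 - ?T6 = ?Pw - ?Py"
    using linearized[of w x y z]
    by (simp add: mult_anticomm[of y x] J_swap23[of w x z]
        hom_jacobian_rotate[of mult alpha x y z])
  have E4: "- ?T4 - ?T2 = ?Pw + ?Pz"
    using linearized[of w y z x]
    by (simp add: mult_anticomm[of z y] J_swap23[of "w \<cdot> y" "alpha x" "alpha z"]
        hom_jacobian_rotate[of mult alpha x y z] hom_jacobian_rotate[of mult alpha y z x])
  have F: "?T1 + ?T2 - ?T3 - ?T4 + ?T5 + ?T6 = ?Px - ?Pw - ?Py + ?Pz"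
    by (rule J_products_identity)
  have "(?T1 + ?T2 + ?T2 - ?Px + ?Pw) + (?T1 + ?T2 + ?T2 - ?Px + ?Pw)
    = ((?T5 + ?T3) - (?Pw + ?Px)) + ((?T2 - ?T5) - (?Py - ?Pw)) + ((?T2 - ?T5) - (?Py - ?Pw))
      + ((?T1 - ?T6) - (?Pw - ?Py)) - ((- ?T4 - ?T2) - (?Pw + ?Pz))
      + ((?T1 + ?T2 - ?T3 - ?T4 + ?T5 + ?T6) - (?Px - ?Pw - ?Py + ?Pz))"
    by (simp add: algebra_simps)
  also have "\<dots> = 0"
    using E1 E2 E3 E4 F by simp
  finally have "?T1 + ?T2 + ?T2 - ?Px + ?Pw = 0"
    by (rule vector_space_double_eq_0[OF vector_space])
  then show "?T1 = ?Px + alpha (alpha w) \<cdot> J x y z - (?T2 + ?T2)"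
    by (simp add: mult_anticomm[of "alpha (alpha w)"] algebra_simps)
qed

lemma hom_malcev_identity_if_star_identity:
  assumes "star_identity mult alpha"
  shows "hom_malcev_identity mult alpha"
  unfolding hom_malcev_identity_def
proof (intro allI)
  fix x y z
  note star = assms[unfolded star_identity_def, rule_format]
  let ?A = "J (x \<cdot> z) (alpha x) (alpha y)" and ?B = "J (x \<cdot> y) (alpha x) (alpha z)"
    and ?p = "J x y z \<cdot> alpha (alpha x)"
  have S1: "?A + ?p + (?B + ?B) = 0"
    using star[of x z x y]
    by (simp add: J_self mult_anticomm[of "alpha (alpha x)"]
        hom_jacobian_rotate[of mult alpha z x y] hom_jacobian_rotate[of mult alpha x y z]
        eq_neg_iff_add_eq_0 algebra_simps)
  have S2: "?B - ?p + (?A + ?A) = 0"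
    using star[of x y x z]
    by (simp add: J_self J_swap[of y x] mult_anticomm[of "alpha (alpha x)"] algebra_simps)
  have "(?A - ?p) + (?A - ?p) + (?A - ?p)
      = (?B - ?p + (?A + ?A)) + (?B - ?p + (?A + ?A)) - (?A + ?p + (?B + ?B))"
    by (simp add: algebra_simps)
  also have "\<dots> = 0"
    by (simp only: S1 S2) simp
  finally have "?A - ?p = 0"
    by (rule vector_space_triple_eq_0[OF vector_space])
  then show "J (alpha x) (alpha y) (x \<cdot> z) = ?p"
    by (simp add: hom_jacobian_rotate[of mult alpha "alpha x"]
        hom_jacobian_rotate[of mult alpha "alpha y"])
qed

lemma star_identity_iff_hom_malcev_identity:
  "star_identity mult alpha \<longleftrightarrow> hom_malcev_identity mult alpha"
  using hom_malcev_identity_if_star_identity star_identity_if_hom_malcev_identity by blast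

end

theorem mainTheorem1:
  fixes scale :: "'k::field_char_0 \<Rightarrow> 'a::ab_group_add \<Rightarrow> 'a"
    and mult :: "'a \<Rightarrow> 'a \<Rightarrow> 'a" and alpha :: "'a \<Rightarrow> 'a"
  shows "(hom_malcev scale mult alpha \<longrightarrow> star_identity mult alpha) \<and>
         (hom_algebra scale mult alpha \<and> anticommutative mult \<longrightarrow>
            (star_identity mult alpha \<longleftrightarrow> hom_malcev_identity mult alpha))"
  using anticommutative_hom_algebra.star_identity_iff_hom_malcev_identity[of scale mult alpha]
  unfolding anticommutative_hom_algebra_def hom_malcev_def by blast

end
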